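(* For all integers $m,n\ge 1$, the number $B_m^{(-n)}(3)$ of ternary strong lonesum $m\times n$ matrices equals $$1+\sum_{j=1}^{\min(m,n)}\ \sum_{\substack{(m_0,\ldots,m_j)\in\mathcal{S}_m^j\\ (n_0,\ldots,n_j)\in\mathcal{S}_n^j}}\binom{m}{m_0,m_1,\ldots,m_j}\binom{n}{n_0,n_1,\ldots,n_j}\prod_{i=1}^{j}f_3(m_i,n_{j+1-i}),$$ where $f_3(r,s)=1+rs+r(2^s-s-1)+s(2^r-r-1)$.
   Context: A ternary matrix has entries in $\{0,1,2\}$; a ternary $m\times n$ matrix is a strong lonesum matrix if no other ternary $m\times n$ matrix has the same row sums and column sums. For $j\ge 1$ and $l\ge 1$, $\mathcal{S}_l^j=\{(l_0,l_1,\ldots,l_j)\in\mathbb{Z}^{j+1}: \sum_{i=0}^j l_i=l,\ l_0\ge 0,\ l_i\ge 1 \text{ for } 1\le i\le j\}$. $\binom{l}{l_0,\ldots,l_j}=\frac{l!}{l_0!\cdots l_j!}$ is the multinomial coefficient. *)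

theory Defs
  imports Main
begin

text \<open>A ternary m x n matrix is represented as a function nat => nat => nat with
  entries in {0,1,2} at positions (i,j), i<m, j<n, and 0 elsewhere (so that
  distinct matrices are distinct functions).\<close>
definition ternary_matrices :: "nat \<Rightarrow> nat \<Rightarrow> (nat \<Rightarrow> nat \<Rightarrow> nat) set" where
  "ternary_matrices m n =
     {A. (\<forall>i j. A i j \<le> 2) \<and> (\<forall>i j. (m \<le> i \<or> n \<le> j) \<longrightarrow> A i j = 0)}"

definition row_sum :: "nat \<Rightarrow> (nat \<Rightarrow> nat \<Rightarrow> nat) \<Rightarrow> nat \<Rightarrow> nat" where
  "row_sum n A i = (\<Sum>j<n. A i j)"

definition col_sum :: "nat \<Rightarrow> (nat \<Rightarrow> nat \<Rightarrow> nat) \<Rightarrow> nat \<Rightarrow> nat" where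
  "col_sum m A j = (\<Sum>i<m. A i j)"

definition strong_lonesum :: "nat \<Rightarrow> nat \<Rightarrow> (nat \<Rightarrow> nat \<Rightarrow> nat) \<Rightarrow> bool" where
  "strong_lonesum m n A \<longleftrightarrow> A \<in> ternary_matrices m n \<and>
     (\<forall>B \<in> ternary_matrices m n.
        (\<forall>i<m. row_sum n B i = row_sum n A i) \<and> (\<forall>j<n. col_sum m B j = col_sum m A j)
        \<longrightarrow> B = A)"

definition num_strong_lonesum :: "nat \<Rightarrow> nat \<Rightarrow> nat" where
  "num_strong_lonesum m n = card {A. strong_lonesum m n A}"

definition S_set :: "nat \<Rightarrow> nat \<Rightarrow> nat list set" where
  "S_set l j = {xs. length xs = j + 1 \<and> sum_list xs = l \<and> (\<forall>i\<in>{1..j}. 1 \<le> xs ! i)}"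

definition multinomial :: "nat \<Rightarrow> nat list \<Rightarrow> int" where
  "multinomial l xs = int (fact l div (\<Prod>x\<leftarrow>xs. fact x))"

definition f3 :: "nat \<Rightarrow> nat \<Rightarrow> int" where
  "f3 r s = 1 + int r * int s + int r * (2 ^ s - int s - 1) + int s * (2 ^ r - int r - 1)"

end

theory Submission
  imports Defs "HOL-Combinatorics.Multiset_Permutations"
begin

(* A strong lonesum matrix admits no "switch": no 2x2 submatrix on which one can add 1 on a
   diagonal and subtract 1 on the anti-diagonal while staying ternary.  For such a matrix the
   nonzero supports of the rows form a chain; ranking them yields a staircase shape (j, a, b):
   levels a i, b k in {0..j} hitting every level 1..j, the matrix is 2 on interior cells
   (a i + b k <= j), nonzero on rim cells (a i + b k = j + 1), zero elsewhere, and within each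
   rim block the cells holding 1 are collinear.  Conversely a potential-function argument shows
   that every staircase matrix is determined by its line sums, and the shape is unique.
   Hence B_m^(-n)(3) is a sum over shapes; for a fixed shape the rim blocks are independent and
   contribute f3 each, and the number of level maps with prescribed fibre sizes is a
   multinomial coefficient.  The term j = 0 is the zero matrix. *)

section \<open>Switchable submatrices\<close>

text \<open>A ternary matrix is switchable if some 2x2 submatrix on rows i, i' and columns k, k'
  allows adding 1 on the diagonal cells (i,k), (i',k') and subtracting 1 on the anti-diagonal
  cells (i,k'), (i',k) while staying ternary.  Such a switch preserves all line sums.\<close>
definition switchable :: "nat \<Rightarrow> nat \<Rightarrow> (nat \<Rightarrow> nat \<Rightarrow> nat) \<Rightarrow> bool" where
  "switchable m n A \<longleftrightarrow> (\<exists>i i' k k'. i < m \<and> i' < m \<and> k < n \<and> k' < n \<and> i \<noteq> i' \<and> k \<noteq> k' \<and>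
      A i k < 2 \<and> A i' k' < 2 \<and> 0 < A i k' \<and> 0 < A i' k)"

lemma sum_move_unit:
  fixes f g :: "nat \<Rightarrow> nat"
  assumes "k < n" "k' < n" "k \<noteq> k'" "g k = f k + 1" "0 < f k'" "g k' = f k' - 1"
    and "\<And>y. y \<noteq> k \<Longrightarrow> y \<noteq> k' \<Longrightarrow> g y = f y"
  shows "(\<Sum>y<n. g y) = (\<Sum>y<n. f y)"
proof -
  have split: "{..<n} = insert k (insert k' ({..<n} - {k, k'}))" using assms by auto
  have rest: "(\<Sum>y\<in>{..<n} - {k, k'}. g y) = (\<Sum>y\<in>{..<n} - {k, k'}. f y)"
    by (rule sum.cong) (auto simp: assms(7))
  show ?thesis
    by (subst (1 2) split) (use assms(3-6) rest in simp)
qed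

definition switch :: "nat \<Rightarrow> nat \<Rightarrow> nat \<Rightarrow> nat \<Rightarrow> (nat \<Rightarrow> nat \<Rightarrow> nat) \<Rightarrow> nat \<Rightarrow> nat \<Rightarrow> nat" where
  "switch i i' k k' A x y = (if (x = i \<and> y = k) \<or> (x = i' \<and> y = k') then A x y + 1
      else if (x = i \<and> y = k') \<or> (x = i' \<and> y = k) then A x y - 1 else A x y)"

lemma switch_line_sums:
  assumes "i < m" "i' < m" "k < n" "k' < n" "i \<noteq> i'" "k \<noteq> k'" "0 < A i k'" "0 < A i' k"
  shows "row_sum n (switch i i' k k' A) x = row_sum n A x"
    and "col_sum m (switch i i' k k' A) y = col_sum m A y"
proof -
  consider "x = i" | "x = i'" | "x \<noteq> i" "x \<noteq> i'" by blast
  then show "row_sum n (switch i i' k k' A) x = row_sum n A x"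
  proof cases
    case 1 show ?thesis unfolding row_sum_def
      by (rule sum_move_unit[of k n k']) (use 1 assms in \<open>auto simp: switch_def\<close>)
  next
    case 2 show ?thesis unfolding row_sum_def
      by (rule sum_move_unit[of k' n k]) (use 2 assms in \<open>auto simp: switch_def\<close>)
  qed (simp add: switch_def row_sum_def)
  consider "y = k" | "y = k'" | "y \<noteq> k" "y \<noteq> k'" by blast
  then show "col_sum m (switch i i' k k' A) y = col_sum m A y"
  proof cases
    case 1 show ?thesis unfolding col_sum_def
      by (rule sum_move_unit[of i m i']) (use 1 assms in \<open>auto simp: switch_def\<close>)
  next
    case 2 show ?thesis unfolding col_sum_def
      by (rule sum_move_unit[of i' m i]) (use 2 assms in \<open>auto simp: switch_def\<close>)
  qed (simp add: switch_def col_sum_def)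
qed

text \<open>A strong lonesum matrix differs from its own switch, which has the same line sums.\<close>
lemma strong_lonesum_not_switchable:
  assumes "strong_lonesum m n A"
  shows "\<not> switchable m n A"
proof
  assume "switchable m n A"
  then obtain i i' k k' where idx: "i < m" "i' < m" "k < n" "k' < n" "i \<noteq> i'" "k \<noteq> k'"
    and vals: "A i k < 2" "A i' k' < 2" "0 < A i k'" "0 < A i' k"
    unfolding switchable_def by blast
  have A: "A \<in> ternary_matrices m n" using assms unfolding strong_lonesum_def by auto
  have "switch i i' k k' A \<in> ternary_matrices m n"
    using A vals idx unfolding ternary_matrices_def switch_def
    by (auto intro: le_trans[OF diff_le_self])
  then have "switch i i' k k' A = A"
    using assms switch_line_sums[OF idx vals(3,4)] unfolding strong_lonesum_def by blast
  then have "switch i i' k k' A i k = A i k" by simp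
  then show False unfolding switch_def by simp
qed


section \<open>Staircase shapes\<close>

definition interior_cell :: "nat \<Rightarrow> (nat \<Rightarrow> nat) \<Rightarrow> (nat \<Rightarrow> nat) \<Rightarrow> nat \<Rightarrow> nat \<Rightarrow> bool" where
  "interior_cell j a b i k \<longleftrightarrow> 1 \<le> a i \<and> 1 \<le> b k \<and> a i + b k \<le> j"

definition rim_cell :: "nat \<Rightarrow> (nat \<Rightarrow> nat) \<Rightarrow> (nat \<Rightarrow> nat) \<Rightarrow> nat \<Rightarrow> nat \<Rightarrow> bool" where
  "rim_cell j a b i k \<longleftrightarrow> 1 \<le> a i \<and> 1 \<le> b k \<and> a i + b k = j + 1"

definition level_maps :: "nat \<Rightarrow> nat \<Rightarrow> (nat \<Rightarrow> nat) set" where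
  "level_maps m j = {a \<in> {..<m} \<rightarrow>\<^sub>E {0..j}. {1..j} \<subseteq> a ` {..<m}}"

definition staircase ::
    "nat \<Rightarrow> nat \<Rightarrow> nat \<Rightarrow> (nat \<Rightarrow> nat) \<Rightarrow> (nat \<Rightarrow> nat) \<Rightarrow> (nat \<Rightarrow> nat \<Rightarrow> nat) \<Rightarrow> bool" where
  "staircase m n j a b A \<longleftrightarrow> A \<in> ternary_matrices m n \<and>
     (\<forall>i<m. \<forall>k<n. (interior_cell j a b i k \<longrightarrow> A i k = 2) \<and> (rim_cell j a b i k \<longrightarrow> 1 \<le> A i k) \<and>
        (\<not> interior_cell j a b i k \<and> \<not> rim_cell j a b i k \<longrightarrow> A i k = 0)) \<and>
     (\<forall>i<m. \<forall>i'<m. \<forall>k<n. \<forall>k'<n. rim_cell j a b i k \<and> rim_cell j a b i' k' \<and> a i = a i' \<and>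
        A i k = 1 \<and> A i' k' = 1 \<longrightarrow> i = i' \<or> k = k')"

lemma interior_not_rim: "interior_cell j a b i k \<Longrightarrow> \<not> rim_cell j a b i k"
  unfolding interior_cell_def rim_cell_def by auto

lemma level_maps_le: "a \<in> level_maps m j \<Longrightarrow> i < m \<Longrightarrow> a i \<le> j"
  unfolding level_maps_def using PiE_mem[of a "{..<m}" "\<lambda>_. {0..j}" i] by auto

lemma level_maps_hit: "a \<in> level_maps m j \<Longrightarrow> l \<in> {1..j} \<Longrightarrow> \<exists>i<m. a i = l"
  unfolding level_maps_def by (force simp: image_iff)

lemma level_maps_extensional: "a \<in> level_maps m j \<Longrightarrow> \<not> i < m \<Longrightarrow> a i = undefined"
  unfolding level_maps_def by (auto simp: PiE_def extensional_def)

lemma staircase_support: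
  assumes "staircase m n j a b A" "i < m" "k < n"
  shows "0 < A i k \<longleftrightarrow> 1 \<le> a i \<and> 1 \<le> b k \<and> a i + b k \<le> j + 1"
proof -
  have "interior_cell j a b i k \<longrightarrow> A i k = 2" "rim_cell j a b i k \<longrightarrow> 1 \<le> A i k"
    "\<not> interior_cell j a b i k \<and> \<not> rim_cell j a b i k \<longrightarrow> A i k = 0"
    using assms unfolding staircase_def by auto
  then show ?thesis unfolding interior_cell_def rim_cell_def by auto
qed


section \<open>The shape of a non-switchable matrix\<close>

text \<open>The shape is read off from the nonzero supports of the rows: they form a chain, j is
  the number of distinct nonempty supports, a row's level is the number of supports containing
  its own, and a column's level is j + 1 minus the number of supports containing it.\<close>
definition row_support :: "nat \<Rightarrow> (nat \<Rightarrow> nat \<Rightarrow> nat) \<Rightarrow> nat \<Rightarrow> nat set" where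
  "row_support n A i = {k. k < n \<and> 0 < A i k}"

definition supports :: "nat \<Rightarrow> nat \<Rightarrow> (nat \<Rightarrow> nat \<Rightarrow> nat) \<Rightarrow> nat set set" where
  "supports m n A = {row_support n A i | i. i < m \<and> row_support n A i \<noteq> {}}"

definition num_steps :: "nat \<Rightarrow> nat \<Rightarrow> (nat \<Rightarrow> nat \<Rightarrow> nat) \<Rightarrow> nat" where
  "num_steps m n A = card (supports m n A)"

definition support_rank :: "nat \<Rightarrow> nat \<Rightarrow> (nat \<Rightarrow> nat \<Rightarrow> nat) \<Rightarrow> nat set \<Rightarrow> nat" where
  "support_rank m n A T = card {T' \<in> supports m n A. T \<subseteq> T'}"

definition col_rank :: "nat \<Rightarrow> nat \<Rightarrow> (nat \<Rightarrow> nat \<Rightarrow> nat) \<Rightarrow> nat \<Rightarrow> nat" where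
  "col_rank m n A k = card {T \<in> supports m n A. k \<in> T}"

definition row_level :: "nat \<Rightarrow> nat \<Rightarrow> (nat \<Rightarrow> nat \<Rightarrow> nat) \<Rightarrow> nat \<Rightarrow> nat" where
  "row_level m n A = restrict (\<lambda>i. if row_support n A i = {} then 0
      else support_rank m n A (row_support n A i)) {..<m}"

definition col_level :: "nat \<Rightarrow> nat \<Rightarrow> (nat \<Rightarrow> nat \<Rightarrow> nat) \<Rightarrow> nat \<Rightarrow> nat" where
  "col_level m n A = restrict (\<lambda>k. if col_rank m n A k = 0 then 0
      else num_steps m n A + 1 - col_rank m n A k) {..<n}"

context
  fixes m n :: nat and A :: "nat \<Rightarrow> nat \<Rightarrow> nat"
  assumes ternary: "A \<in> ternary_matrices m n" and not_switchable: "\<not> switchable m n A"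
begin

private abbreviation "S \<equiv> row_support n A"
private abbreviation "F \<equiv> supports m n A"
private abbreviation "j \<equiv> num_steps m n A"
private abbreviation "rank \<equiv> support_rank m n A"
private abbreviation "a \<equiv> row_level m n A"
private abbreviation "b \<equiv> col_level m n A"

text \<open>Two incomparable row supports would give a switchable submatrix.\<close>
private lemma supports_chain: "T \<in> F \<Longrightarrow> T' \<in> F \<Longrightarrow> T \<subseteq> T' \<or> T' \<subseteq> T"
proof (rule ccontr)
  assume "T \<in> F" "T' \<in> F" and incomparable: "\<not> (T \<subseteq> T' \<or> T' \<subseteq> T)"
  then obtain i i' where i: "i < m" "T = S i" and i': "i' < m" "T' = S i'"
    unfolding supports_def by blast
  from incomparable obtain k k' where "k \<in> S i" "k \<notin> S i'" "k' \<in> S i'" "k' \<notin> S i"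
    unfolding i i' by blast
  then have "k < n" "k' < n" "i \<noteq> i'" "k \<noteq> k'" "0 < A i k" "0 < A i' k'" "A i' k = 0" "A i k' = 0"
    unfolding row_support_def by auto
  then have "switchable m n A"
    unfolding switchable_def using i i'
    by (intro exI[of _ i'] exI[of _ i] exI[of _ k] exI[of _ k']) auto
  then show False using not_switchable by blast
qed

private lemma finite_supports: "finite F"
proof -
  have "F \<subseteq> S ` {..<m}" unfolding supports_def by auto
  then show ?thesis by (rule finite_subset) auto
qed

private lemma supports_nonempty: "T \<in> F \<Longrightarrow> T \<noteq> {}"
  unfolding supports_def by auto

private lemma supports_subset: "T \<in> F \<Longrightarrow> T \<subseteq> {..<n}"
  unfolding supports_def row_support_def by auto

private lemma row_support_in_supports: "i < m \<Longrightarrow> S i \<noteq> {} \<Longrightarrow> S i \<in> F"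
  unfolding supports_def by auto

private lemma finite_upper: "finite {T' \<in> F. P T'}"
  using finite_supports by simp

private lemma rank_range: "T \<in> F \<Longrightarrow> rank T \<in> {1..j}"
proof -
  assume T: "T \<in> F"
  have "rank T \<le> j"
    unfolding support_rank_def num_steps_def by (intro card_mono finite_supports) auto
  moreover have "rank T \<noteq> 0"
    unfolding support_rank_def using T finite_upper by auto
  ultimately show ?thesis by simp
qed

text \<open>Since the supports form a chain, the rank is a bijection from the supports onto 1..j.\<close>
private lemma rank_strict_anti: "T \<in> F \<Longrightarrow> T' \<in> F \<Longrightarrow> T \<subset> T' \<Longrightarrow> rank T' < rank T"
  unfolding support_rank_def by (intro psubset_card_mono finite_upper) auto

private lemma rank_image: "rank ` F = {1..j}"
proof (rule card_subset_eq)
  have "inj_on rank F"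
  proof (rule inj_onI)
    fix T T' assume "T \<in> F" "T' \<in> F" "rank T = rank T'"
    then show "T = T'"
      using supports_chain rank_strict_anti by (metis less_irrefl psubsetI)
  qed
  then show "card (rank ` F) = card {1..j}"
    by (simp add: card_image num_steps_def)
qed (use rank_range in auto)

private lemma col_rank_le: "col_rank m n A k \<le> j"
  unfolding col_rank_def num_steps_def by (intro card_mono finite_supports) auto

private lemma row_level_eq: "i < m \<Longrightarrow> a i = (if S i = {} then 0 else rank (S i))"
  unfolding row_level_def by simp

private lemma col_level_eq:
  "k < n \<Longrightarrow> col_rank m n A k \<noteq> 0 \<Longrightarrow> b k = j + 1 - col_rank m n A k"
  unfolding col_level_def by simp

private lemma support_by_levels:
  assumes "i < m" "k < n"
  shows "0 < A i k \<longleftrightarrow> 1 \<le> a i \<and> 1 \<le> b k \<and> a i + b k \<le> j + 1"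
proof
  assume "0 < A i k"
  then have k: "k \<in> S i" using assms unfolding row_support_def by auto
  then have SF: "S i \<in> F" using row_support_in_supports[OF assms(1)] by auto
  have "rank (S i) \<le> col_rank m n A k"
    unfolding support_rank_def col_rank_def using k by (intro card_mono finite_upper) auto
  moreover have "rank (S i) \<ge> 1" using rank_range[OF SF] by simp
  ultimately show "1 \<le> a i \<and> 1 \<le> b k \<and> a i + b k \<le> j + 1"
    using row_level_eq[OF assms(1)] col_level_eq[OF assms(2)] col_rank_le[of k] k by auto
next
  assume levels: "1 \<le> a i \<and> 1 \<le> b k \<and> a i + b k \<le> j + 1"
  then have ne: "S i \<noteq> {}" and a: "a i = rank (S i)" using row_level_eq[OF assms(1)] by auto
  then have SF: "S i \<in> F" using row_support_in_supports[OF assms(1)] by auto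
  have c: "col_rank m n A k \<noteq> 0"
    using levels assms(2) unfolding col_level_def by (auto split: if_splits)
  show "0 < A i k"
  proof (rule ccontr)
    assume "\<not> 0 < A i k"
    then have "k \<notin> S i" unfolding row_support_def by auto
    then have "{T \<in> F. k \<in> T} \<subseteq> {T \<in> F. S i \<subseteq> T} - {S i}"
      using supports_chain[OF _ SF] by auto
    then have "col_rank m n A k \<le> card ({T \<in> F. S i \<subseteq> T} - {S i})"
      unfolding col_rank_def by (intro card_mono) (auto intro: finite_subset[OF _ finite_supports])
    also have "\<dots> = rank (S i) - 1"
      unfolding support_rank_def using SF finite_upper by (subst card_Diff_singleton) auto
    finally show False
      using levels a col_level_eq[OF assms(2) c] col_rank_le[of k] c by (simp; arith)
  qed
qed

text \<open>Every support T owns a column lying in T but in no smaller support: the union of the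
  supports strictly below T is itself one of them (or empty), hence misses part of T.\<close>
private lemma own_column: "T \<in> F \<Longrightarrow> \<exists>k<n. col_rank m n A k = rank T"
proof -
  assume TF: "T \<in> F"
  define U where "U = {U \<in> F. U \<subset> T}"
  have "\<Union>U \<subset> T"
  proof (cases "U = {}")
    case True then show ?thesis using supports_nonempty[OF TF] by auto
  next
    case False
    have "subset.chain F U" unfolding subset_chain_def U_def using supports_chain by auto
    then have "\<Union>U \<in> U" using False finite_upper by (intro Union_in_chain) (auto simp: U_def)
    then show ?thesis unfolding U_def by blast
  qed
  then obtain k where k: "k \<in> T" "k \<notin> \<Union>U" by blast
  have "{T' \<in> F. k \<in> T'} = {T' \<in> F. T \<subseteq> T'}"
  proof (intro Collect_cong conj_cong refl iffI)
    fix T' assume "T' \<in> F" "k \<in> T'"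
    then show "T \<subseteq> T'" using supports_chain[OF TF] k unfolding U_def by blast
  qed (use k in auto)
  then have "col_rank m n A k = rank T" unfolding col_rank_def support_rank_def by simp
  moreover have "k < n" using supports_subset[OF TF] k by auto
  ultimately show ?thesis by blast
qed

private lemma row_levels_hit: "{1..j} \<subseteq> a ` {..<m}"
proof
  fix l assume "l \<in> {1..j}"
  then obtain T where T: "T \<in> F" "rank T = l" using rank_image by (metis imageE)
  then obtain i where "i < m" "T = S i" "S i \<noteq> {}" unfolding supports_def by blast
  then show "l \<in> a ` {..<m}" using row_level_eq T by force
qed

private lemma col_levels_hit: "{1..j} \<subseteq> b ` {..<n}"
proof
  fix l assume l: "l \<in> {1..j}"
  then have "j + 1 - l \<in> rank ` F" unfolding rank_image by auto
  then obtain T where T: "j + 1 - l = rank T" "T \<in> F" by (rule imageE)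
  obtain k where "k < n" "col_rank m n A k = j + 1 - l" using own_column[OF T(2)] T(1) by auto
  then have "k < n" "b k = l" using l col_level_eq by auto
  then show "l \<in> b ` {..<n}" by force
qed

lemma row_level_in_level_maps: "a \<in> level_maps m j"
proof -
  have "a i \<le> j" if "i < m" for i
    using row_level_eq[OF that] rank_range row_support_in_supports[OF that] by force
  then show ?thesis
    unfolding level_maps_def using row_levels_hit by (auto simp: row_level_def)
qed

lemma col_level_in_level_maps: "b \<in> level_maps n j"
  unfolding level_maps_def using col_levels_hit by (auto simp: col_level_def)

lemma num_steps_le: "j \<le> min m n"
proof -
  have "j \<le> m" using card_mono[OF _ row_levels_hit] card_image_le[of "{..<m}" a] by fastforce
  moreover have "j \<le> n"
    using card_mono[OF _ col_levels_hit] card_image_le[of "{..<n}" b] by fastforce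
  ultimately show ?thesis by simp
qed

text \<open>Non-switchability forces the value 2 on interior cells and the rim condition.\<close>
lemma staircase_of_levels: "staircase m n j a b A"
  unfolding staircase_def
proof (intro conjI allI impI ternary)
  fix i k assume ik: "i < m" "k < n" and interior: "interior_cell j a b i k"
  then have l: "j + 1 - b k \<in> {1..j}" "j + 1 - a i \<in> {1..j}" unfolding interior_cell_def by auto
  obtain i' where i': "i' < m" "a i' = j + 1 - b k" using row_levels_hit l(1) by force
  obtain k' where k': "k' < n" "b k' = j + 1 - a i" using col_levels_hit l(2) by force
  have "0 < A i k'" "0 < A i' k" "A i' k' = 0" "i \<noteq> i'" "k \<noteq> k'"
    using support_by_levels[OF ik(1) k'(1)] support_by_levels[OF i'(1) ik(2)]
      support_by_levels[OF i'(1) k'(1)] interior i' k' unfolding interior_cell_def by auto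
  then have "\<not> A i k < 2"
    using not_switchable ik i'(1) k'(1) unfolding switchable_def
    by (metis zero_less_numeral)
  moreover have "A i k \<le> 2" using ternary unfolding ternary_matrices_def by auto
  ultimately show "A i k = 2" by simp
next
  fix i k assume "i < m" "k < n" "rim_cell j a b i k"
  then show "1 \<le> A i k" using support_by_levels unfolding rim_cell_def by force
next
  fix i k assume "i < m" "k < n" "\<not> interior_cell j a b i k \<and> \<not> rim_cell j a b i k"
  then show "A i k = 0"
    using support_by_levels unfolding interior_cell_def rim_cell_def by fastforce
next
  fix i i' k k' assume idx: "i < m" "i' < m" "k < n" "k' < n"
    and rim: "rim_cell j a b i k \<and> rim_cell j a b i' k' \<and> a i = a i' \<and> A i k = 1 \<and> A i' k' = 1"
  then have "0 < A i k'" "0 < A i' k"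
    using support_by_levels[OF idx(1,4)] support_by_levels[OF idx(2,3)]
    unfolding rim_cell_def by auto
  then show "i = i' \<or> k = k'"
    using not_switchable idx rim unfolding switchable_def by fastforce
qed

end


section \<open>The shape of a staircase matrix is unique\<close>

lemma image_filter: "{y \<in> f ` X. P y} = f ` {x \<in> X. P (f x)}"
  by auto

context
  fixes m n j :: nat and a b :: "nat \<Rightarrow> nat" and A :: "nat \<Rightarrow> nat \<Rightarrow> nat"
  assumes a: "a \<in> level_maps m j" and b: "b \<in> level_maps n j"
    and staircase: "staircase m n j a b A"
begin

text \<open>In a staircase matrix the rows of level l are supported on the columns of level at most
  j + 1 - l; these sets are distinct for l = 1..j, so the shape read off from the supports is
  the given one.\<close>
private definition step_columns :: "nat \<Rightarrow> nat set" where
  "step_columns l = {k. k < n \<and> 1 \<le> b k \<and> b k + l \<le> j + 1}"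

private lemma row_support_eq:
  "i < m \<Longrightarrow> row_support n A i = (if a i = 0 then {} else step_columns (a i))"
proof -
  assume i: "i < m"
  have "k \<in> row_support n A i \<longleftrightarrow> k \<in> (if a i = 0 then {} else step_columns (a i))" for k
    using staircase_support[OF staircase i, of k] by (auto simp: row_support_def step_columns_def)
  then show ?thesis by blast
qed

private lemma step_columns_subset_iff:
  assumes "l \<in> {1..j}" "l' \<in> {1..j}"
  shows "step_columns l \<subseteq> step_columns l' \<longleftrightarrow> l' \<le> l"
proof
  assume sub: "step_columns l \<subseteq> step_columns l'"
  have "j + 1 - l \<in> {1..j}" using assms by auto
  then obtain k where k: "k < n" "b k = j + 1 - l" using level_maps_hit[OF b] by blast
  then have "k \<in> step_columns l" using assms unfolding step_columns_def by auto
  then show "l' \<le> l" using sub k assms unfolding step_columns_def by auto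
qed (auto simp: step_columns_def)

private lemma step_columns_inj: "inj_on step_columns {1..j}"
  by (rule inj_onI) (metis step_columns_subset_iff order.refl le_antisym)

private lemma step_columns_nonempty: "l \<in> {1..j} \<Longrightarrow> step_columns l \<noteq> {}"
proof -
  assume l: "l \<in> {1..j}"
  obtain k where "k < n" "b k = 1" using level_maps_hit[OF b, of 1] l by auto
  then have "k \<in> step_columns l" using l unfolding step_columns_def by auto
  then show ?thesis by auto
qed

private lemma supports_eq: "supports m n A = step_columns ` {1..j}"
proof (intro equalityI subsetI)
  fix T assume "T \<in> supports m n A"
  then obtain i where i: "i < m" "T = row_support n A i" "row_support n A i \<noteq> {}"
    unfolding supports_def by auto
  then show "T \<in> step_columns ` {1..j}"
    using row_support_eq[OF i(1)] level_maps_le[OF a i(1)] by (auto split: if_splits)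
next
  fix T assume "T \<in> step_columns ` {1..j}"
  then obtain l where l: "l \<in> {1..j}" "T = step_columns l" by auto
  obtain i where i: "i < m" "a i = l" using level_maps_hit[OF a l(1)] by auto
  then have "row_support n A i = T" "T \<noteq> {}"
    using row_support_eq[OF i(1)] l step_columns_nonempty by auto
  then show "T \<in> supports m n A" unfolding supports_def using i(1) by blast
qed

lemma num_steps_unique: "num_steps m n A = j"
  unfolding num_steps_def supports_eq card_image[OF step_columns_inj] by simp

lemma row_level_unique: "row_level m n A = a"
proof
  fix i show "row_level m n A i = a i"
  proof (cases "i < m \<and> a i \<noteq> 0")
    case True
    then have ai: "a i \<in> {1..j}" using level_maps_le[OF a] by auto
    have "{l \<in> {1..j}. step_columns (a i) \<subseteq> step_columns l} = {l \<in> {1..j}. l \<le> a i}"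
      using step_columns_subset_iff[OF ai] by blast
    also have "\<dots> = {1..a i}" using ai by auto
    finally have "{T \<in> supports m n A. step_columns (a i) \<subseteq> T} = step_columns ` {1..a i}"
      unfolding supports_eq image_filter by simp
    moreover have "card (step_columns ` {1..a i}) = a i"
      using ai by (subst card_image) (auto intro: inj_on_subset[OF step_columns_inj])
    ultimately show ?thesis
      using True row_support_eq step_columns_nonempty[OF ai]
      by (simp add: row_level_def support_rank_def)
  qed (use row_support_eq level_maps_extensional[OF a] in \<open>auto simp: row_level_def\<close>)
qed

lemma col_level_unique: "col_level m n A = b"
proof
  fix k show "col_level m n A k = b k"
  proof (cases "k < n")
    case True
    have "{T \<in> supports m n A. k \<in> T} = step_columns ` {l \<in> {1..j}. k \<in> step_columns l}"
      unfolding supports_eq image_filter ..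
    moreover have "inj_on step_columns {l \<in> {1..j}. k \<in> step_columns l}"
      by (rule inj_on_subset[OF step_columns_inj]) auto
    ultimately have "col_rank m n A k = card {l \<in> {1..j}. k \<in> step_columns l}"
      unfolding col_rank_def by (simp add: card_image)
    also have "{l \<in> {1..j}. k \<in> step_columns l} = (if b k = 0 then {} else {1..j + 1 - b k})"
      using True level_maps_le[OF b True] unfolding step_columns_def by auto
    finally show ?thesis
      using True level_maps_le[OF b True] by (auto simp: col_level_def num_steps_unique)
  qed (use level_maps_extensional[OF b] in \<open>simp add: col_level_def\<close>)
qed

end


section \<open>Staircase matrices are strong lonesum\<close>

lemma zero_sum_signs:
  fixes f :: "'a \<Rightarrow> int"
  assumes "finite S" "sum f S = 0" "x \<in> S" "f x \<noteq> 0"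
  shows "\<exists>y\<in>S. f y < 0" and "\<exists>y\<in>S. 0 < f y"
proof -
  show "\<exists>y\<in>S. f y < 0"
    using sum_nonneg_eq_0_iff[of S f] assms by force
  show "\<exists>y\<in>S. 0 < f y"
    using sum_nonneg_eq_0_iff[of S "\<lambda>y. - f y"] assms by (force simp: sum_negf)
qed

lemma zero_line_sums_orthogonal:
  fixes D :: "nat \<Rightarrow> nat \<Rightarrow> int"
  assumes rows: "\<And>i. i < m \<Longrightarrow> (\<Sum>k<n. D i k) = 0"
    and cols: "\<And>k. k < n \<Longrightarrow> (\<Sum>i<m. D i k) = 0"
  shows "(\<Sum>i<m. \<Sum>k<n. D i k * (c - u i - v k)) = 0"
proof -
  have "(\<Sum>i<m. \<Sum>k<n. D i k * (c - u i - v k)) =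
      (\<Sum>i<m. \<Sum>k<n. (c - u i) * D i k) - (\<Sum>i<m. \<Sum>k<n. v k * D i k)"
    by (simp add: algebra_simps sum_subtractf sum.distrib)
  also have "\<dots> = (\<Sum>i<m. (c - u i) * (\<Sum>k<n. D i k)) - (\<Sum>k<n. v k * (\<Sum>i<m. D i k))"
    by (simp add: sum_distrib_left sum.swap[of _ "{..<m}"])
  also have "\<dots> = 0" by (simp add: rows cols)
  finally show ?thesis .
qed

definition potential :: "nat \<Rightarrow> (nat \<Rightarrow> nat) \<Rightarrow> (nat \<Rightarrow> nat) \<Rightarrow> nat \<Rightarrow> nat \<Rightarrow> int" where
  "potential j a b i k = int (j + 1) - int (if a i = 0 then j + 1 else a i)
     - int (if b k = 0 then j + 1 else b k)"

lemma potential_sign: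
  assumes "staircase m n j a b A" "a i \<le> j" "b k \<le> j" "i < m" "k < n"
  shows "0 < potential j a b i k \<Longrightarrow> A i k = 2"
    and "potential j a b i k < 0 \<Longrightarrow> A i k = 0"
    and "potential j a b i k = 0 \<Longrightarrow> rim_cell j a b i k"
proof -
  have "interior_cell j a b i k \<longrightarrow> A i k = 2"
    "\<not> interior_cell j a b i k \<and> \<not> rim_cell j a b i k \<longrightarrow> A i k = 0"
    using assms(1,4,5) unfolding staircase_def by auto
  then show "0 < potential j a b i k \<Longrightarrow> A i k = 2"
    and "potential j a b i k < 0 \<Longrightarrow> A i k = 0"
    and "potential j a b i k = 0 \<Longrightarrow> rim_cell j a b i k"
    using assms(2,3) unfolding potential_def interior_cell_def rim_cell_def
    by (auto split: if_splits)
qed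

context
  fixes m n j :: nat and a b :: "nat \<Rightarrow> nat" and A B :: "nat \<Rightarrow> nat \<Rightarrow> nat"
  assumes a: "a \<in> level_maps m j" and b: "b \<in> level_maps n j"
    and staircase: "staircase m n j a b A"
    and B: "B \<in> ternary_matrices m n"
    and rows: "\<forall>i<m. row_sum n B i = row_sum n A i"
    and cols: "\<forall>k<n. col_sum m B k = col_sum m A k"
begin

private definition D :: "nat \<Rightarrow> nat \<Rightarrow> int" where
  "D i k = int (B i k) - int (A i k)"

private lemma D_rows: "i < m \<Longrightarrow> (\<Sum>k<n. D i k) = 0"
  using rows unfolding D_def row_sum_def by (simp add: sum_subtractf flip: of_nat_sum)

private lemma D_cols: "k < n \<Longrightarrow> (\<Sum>i<m. D i k) = 0"
  using cols unfolding D_def col_sum_def by (simp add: sum_subtractf flip: of_nat_sum)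

text \<open>Every term of the orthogonality relation is nonpositive, so all of them vanish:
  B differs from A only on rim cells.\<close>
private lemma D_off_rim: "i < m \<Longrightarrow> k < n \<Longrightarrow> D i k \<noteq> 0 \<Longrightarrow> rim_cell j a b i k"
proof -
  assume ik: "i < m" "k < n" "D i k \<noteq> 0"
  let ?t = "\<lambda>(i, k). D i k * potential j a b i k"
  have sign: "?t p \<le> 0" if p: "p \<in> {..<m} \<times> {..<n}" for p
  proof -
    obtain i k where p: "p = (i, k)" "i < m" "k < n" using p by (cases p) auto
    have "B i k \<le> 2" using B unfolding ternary_matrices_def by auto
    then show ?thesis
      using potential_sign[OF staircase level_maps_le[OF a p(2)] level_maps_le[OF b p(3)] p(2,3)]
      unfolding p(1) D_def by (cases "potential j a b i k" "0::int" rule: linorder_cases)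
        (auto simp: mult_nonpos_nonneg mult_nonneg_nonpos)
  qed
  have "sum ?t ({..<m} \<times> {..<n}) = 0"
    using zero_line_sums_orthogonal[OF D_rows D_cols, of "int (j + 1)"]
    unfolding potential_def sum.cartesian_product[symmetric] by (simp add: split_def)
  then have "?t (i, k) = 0"
    using sum_nonneg_eq_0_iff[of "{..<m} \<times> {..<n}" "\<lambda>p. - ?t p"] sign ik(1,2)
    by (simp add: sum_negf)
  then show "rim_cell j a b i k"
    using ik potential_sign(3)[OF staircase level_maps_le[OF a ik(1)] level_maps_le[OF b ik(2)]
      ik(1,2)]
    by simp
qed

private lemma D_pos: "i < m \<Longrightarrow> k < n \<Longrightarrow> 0 < D i k \<Longrightarrow> A i k = 1 \<and> rim_cell j a b i k"
proof -
  assume ik: "i < m" "k < n" "0 < D i k"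
  then have rim: "rim_cell j a b i k" using D_off_rim by auto
  then have "1 \<le> A i k" using staircase ik unfolding staircase_def by auto
  moreover have "B i k \<le> 2" using B unfolding ternary_matrices_def by auto
  ultimately show ?thesis using ik(3) rim unfolding D_def by auto
qed

text \<open>A positive entry at (i,k) forces a negative one at some (i',k) on the same rim block, and
  then a positive one at some (i',k'), contradicting the rim condition of the staircase.\<close>
private lemma D_not_pos: "i < m \<Longrightarrow> k < n \<Longrightarrow> \<not> 0 < D i k"
proof
  assume ik: "i < m" "k < n" "0 < D i k"
  note pos = D_pos[OF ik]
  obtain i' where i': "i' < m" "D i' k < 0"
    using zero_sum_signs(1)[of "{..<m}" "\<lambda>i. D i k" i] D_cols ik by auto
  have rim': "rim_cell j a b i' k" using D_off_rim[OF i'(1) ik(2)] i'(2) by auto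
  obtain k' where k': "k' < n" "0 < D i' k'"
    using zero_sum_signs(2)[of "{..<n}" "D i'" k] D_rows[OF i'(1)] i'(2) ik(2) by auto
  note pos' = D_pos[OF i'(1) k']
  have "a i = a i'" using pos rim' unfolding rim_cell_def by auto
  moreover have "i \<noteq> i'" "k \<noteq> k'" using ik(3) i'(2) k'(2) by auto
  ultimately show False
    using staircase ik(1,2) i'(1) k'(1) pos pos' unfolding staircase_def by blast
qed

lemma staircase_line_sums_unique: "B = A"
proof (intro ext)
  fix i k show "B i k = A i k"
  proof (cases "i < m \<and> k < n")
    case True
    have "D i k = 0"
    proof (rule ccontr)
      assume "D i k \<noteq> 0"
      then have "D i k < 0" using D_not_pos True by force
      then obtain k' where "k' < n" "0 < D i k'"
        using zero_sum_signs(2)[of "{..<n}" "D i" k] D_rows True by auto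
      then show False using D_not_pos True by blast
    qed
    then show ?thesis unfolding D_def by simp
  qed (use B staircase in \<open>auto simp: staircase_def ternary_matrices_def\<close>)
qed

end

lemma staircase_strong_lonesum:
  assumes "a \<in> level_maps m j" "b \<in> level_maps n j" "staircase m n j a b A"
  shows "strong_lonesum m n A"
  using assms staircase_line_sums_unique[OF assms] unfolding strong_lonesum_def staircase_def
  by blast


section \<open>Counting collinear cell sets: the numbers f3\<close>

definition collinear :: "(nat \<times> nat) set \<Rightarrow> bool" where
  "collinear T \<longleftrightarrow> (\<forall>p\<in>T. \<forall>q\<in>T. fst p = fst q \<or> snd p = snd q)"

lemma card_le_one_subsets:
  assumes "finite X"
  shows "card {T. T \<subseteq> X \<and> card T \<le> 1} = 1 + card X"
proof -
  have "{T. T \<subseteq> X \<and> card T \<le> 1} = insert {} ((\<lambda>x. {x}) ` X)"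
  proof (intro equalityI subsetI)
    fix T assume T: "T \<in> {T. T \<subseteq> X \<and> card T \<le> 1}"
    show "T \<in> insert {} ((\<lambda>x. {x}) ` X)"
    proof (cases "T = {}")
      case False
      have "finite T" using T assms finite_subset by auto
      then have "card T = 1" using T False by (simp add: card_gt_0_iff le_antisym Suc_leI)
      then obtain x where "T = {x}" by (rule card_1_singletonE)
      then show ?thesis using T by auto
    qed simp
  qed auto
  moreover have "card (insert {} ((\<lambda>x. {x}) ` X)) = 1 + card ((\<lambda>x. {x}) ` X)"
    using assms by (subst card_insert_disjoint) auto
  moreover have "card ((\<lambda>x. {x}) ` X) = card X" by (rule card_image) (auto simp: inj_on_def)
  ultimately show ?thesis by simp
qed

lemma card_ge_two_subsets:
  assumes "finite X"
  shows "int (card {T. T \<subseteq> X \<and> 2 \<le> card T}) = 2 ^ card X - int (card X) - 1"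
proof -
  have "Pow X = {T. T \<subseteq> X \<and> card T \<le> 1} \<union> {T. T \<subseteq> X \<and> 2 \<le> card T}" by auto
  then have "card (Pow X) = card {T. T \<subseteq> X \<and> card T \<le> 1} + card {T. T \<subseteq> X \<and> 2 \<le> card T}"
    using assms by (subst card_Un_disjoint[symmetric]) auto
  then have "2 ^ card X = 1 + card X + card {T. T \<subseteq> X \<and> 2 \<le> card T}"
    using card_le_one_subsets[OF assms] card_Pow[of X] assms by simp
  then have "int (2 ^ card X) = 1 + int (card X) + int (card {T. T \<subseteq> X \<and> 2 \<le> card T})"
    by (metis of_nat_add of_nat_1)
  then show ?thesis by simp
qed

lemma card_ge_two_subsets_UN:
  assumes "finite I" "disjoint_family_on X I" "\<And>i. i \<in> I \<Longrightarrow> finite (X i) \<and> card (X i) = c"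
  shows "int (card (\<Union>i\<in>I. {T. T \<subseteq> X i \<and> 2 \<le> card T})) = int (card I) * (2 ^ c - int c - 1)"
proof -
  have "card (\<Union>i\<in>I. {T. T \<subseteq> X i \<and> 2 \<le> card T}) = (\<Sum>i\<in>I. card {T. T \<subseteq> X i \<and> 2 \<le> card T})"
  proof (rule card_UN_disjoint[OF assms(1)])
    show "\<forall>i\<in>I. finite {T. T \<subseteq> X i \<and> 2 \<le> card T}" using assms(3) by auto
    show "\<forall>i\<in>I. \<forall>i'\<in>I. i \<noteq> i' \<longrightarrow>
        {T. T \<subseteq> X i \<and> 2 \<le> card T} \<inter> {T. T \<subseteq> X i' \<and> 2 \<le> card T} = {}"
    proof (intro ballI impI equals0I)
      fix i i' T assume "i \<in> I" "i' \<in> I" "i \<noteq> i'"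
        and T: "T \<in> {T. T \<subseteq> X i \<and> 2 \<le> card T} \<inter> {T. T \<subseteq> X i' \<and> 2 \<le> card T}"
      then have "X i \<inter> X i' = {}" using assms(2) by (simp add: disjoint_family_on_def)
      then have "T = {}" using T by blast
      then show False using T by simp
    qed
  qed
  then show ?thesis using assms(3) by (simp add: of_nat_sum card_ge_two_subsets)
qed

lemma collinear_row_or_column:
  assumes "T \<subseteq> R \<times> C" "2 \<le> card T" "collinear T"
  shows "(\<exists>i\<in>R. T \<subseteq> {i} \<times> C) \<or> (\<exists>k\<in>C. T \<subseteq> R \<times> {k})"
proof -
  have "finite T" using assms(2) card.infinite by fastforce
  then obtain p q where pq: "p \<in> T" "q \<in> T" "p \<noteq> q"
    using assms(2) card_le_Suc0_iff_eq[of T] by (metis not_less_eq_eq numeral_2_eq_2)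
  have line: "(fst t = fst p \<or> snd t = snd p) \<and> (fst t = fst q \<or> snd t = snd q)" if "t \<in> T" for t
    using assms(3) that pq unfolding collinear_def by blast
  show ?thesis
  proof (cases "fst p = fst q")
    case True
    then have "snd p \<noteq> snd q" using pq(3) by (simp add: prod_eq_iff)
    then have "T \<subseteq> {fst p} \<times> C" using assms(1) line True by fastforce
    then show ?thesis using assms(1) pq by blast
  next
    case False
    then have "snd p = snd q" using assms(3) pq unfolding collinear_def by blast
    then have "T \<subseteq> R \<times> {snd p}" using assms(1) line False by fastforce
    then show ?thesis using assms(1) pq by blast
  qed
qed

lemma collinear_subsets_eq:
  assumes "finite R" "finite C"
  shows "{T. T \<subseteq> R \<times> C \<and> collinear T} = {T. T \<subseteq> R \<times> C \<and> card T \<le> 1}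
      \<union> (\<Union>i\<in>R. {T. T \<subseteq> {i} \<times> C \<and> 2 \<le> card T}) \<union> (\<Union>k\<in>C. {T. T \<subseteq> R \<times> {k} \<and> 2 \<le> card T})"
    (is "_ = ?small \<union> ?in_row \<union> ?in_col")
proof (intro equalityI subsetI)
  fix T assume T: "T \<in> {T. T \<subseteq> R \<times> C \<and> collinear T}"
  show "T \<in> ?small \<union> ?in_row \<union> ?in_col"
  proof (cases "card T \<le> 1")
    case False
    then show ?thesis using collinear_row_or_column[of T R C] T by fastforce
  qed (use T in simp)
next
  fix T assume "T \<in> ?small \<union> ?in_row \<union> ?in_col"
  then consider "T \<subseteq> R \<times> C" "card T \<le> 1" | i where "i \<in> R" "T \<subseteq> {i} \<times> C"
    | k where "k \<in> C" "T \<subseteq> R \<times> {k}"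
    by blast
  then show "T \<in> {T. T \<subseteq> R \<times> C \<and> collinear T}"
  proof cases
    case 1
    then have "finite T" using finite_subset assms by blast
    then show ?thesis using 1 by (auto simp: collinear_def card_le_Suc0_iff_eq)
  qed (auto simp: collinear_def subset_iff, metis+)
qed

text \<open>Counting the three kinds of collinear sets gives f3.\<close>
lemma card_collinear_subsets:
  assumes "finite R" "finite C"
  shows "int (card {T. T \<subseteq> R \<times> C \<and> collinear T}) = f3 (card R) (card C)"
proof -
  define small where "small = {T. T \<subseteq> R \<times> C \<and> card T \<le> 1}"
  define in_row where "in_row = (\<Union>i\<in>R. {T. T \<subseteq> {i} \<times> C \<and> 2 \<le> card T})"
  define in_col where "in_col = (\<Union>k\<in>C. {T. T \<subseteq> R \<times> {k} \<and> 2 \<le> card T})"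
  have fin: "finite (R \<times> C)" using assms by simp
  have "finite small" "finite in_row" "finite in_col"
    unfolding small_def in_row_def in_col_def using assms by auto
  moreover have "small \<inter> in_row = {}" "small \<inter> in_col = {}"
    unfolding small_def in_row_def in_col_def by auto
  moreover have "in_row \<inter> in_col = {}"
  proof -
    have False if "T \<subseteq> {i} \<times> C" "T \<subseteq> R \<times> {k}" "2 \<le> card T" for T i k
    proof -
      have "T \<subseteq> {(i, k)}" using that(1,2) by auto
      then show False using card_mono[of "{(i, k)}" T] that(3) by simp
    qed
    then show ?thesis unfolding in_row_def in_col_def by blast
  qed
  ultimately have "int (card {T. T \<subseteq> R \<times> C \<and> collinear T}) =
      int (card small) + int (card in_row) + int (card in_col)"
    unfolding collinear_subsets_eq[OF assms] small_def[symmetric] in_row_def[symmetric]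
      in_col_def[symmetric]
    by (simp add: card_Un_disjoint Int_Un_distrib2)
  also have "int (card small) = 1 + int (card R) * int (card C)"
    unfolding small_def using card_le_one_subsets[OF fin] by (simp add: card_cartesian_product)
  also have "int (card in_row) = int (card R) * (2 ^ card C - int (card C) - 1)"
    unfolding in_row_def using assms
    by (intro card_ge_two_subsets_UN) (auto simp: disjoint_family_on_def card_cartesian_product)
  also have "int (card in_col) = int (card C) * (2 ^ card R - int (card R) - 1)"
    unfolding in_col_def using assms
    by (intro card_ge_two_subsets_UN) (auto simp: disjoint_family_on_def card_cartesian_product)
  finally show ?thesis unfolding f3_def by simp
qed


section \<open>Counting the staircase matrices of a given shape\<close>

lemma bij_betw_restrict_parts:
  assumes "disjoint_family_on B I"
  shows "bij_betw (\<lambda>T. restrict (\<lambda>l. T \<inter> B l) I)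
      {T. T \<subseteq> (\<Union>l\<in>I. B l) \<and> (\<forall>l\<in>I. P l (T \<inter> B l))} (\<Pi>\<^sub>E l\<in>I. {S. S \<subseteq> B l \<and> P l S})"
proof (rule bij_betw_byWitness[where f' = "\<lambda>F. \<Union>l\<in>I. F l"])
  have parts: "(\<Union>l'\<in>I. F l') \<inter> B l = F l" if "F \<in> (\<Pi>\<^sub>E l\<in>I. {S. S \<subseteq> B l \<and> P l S})" "l \<in> I" for F l
  proof -
    have "F l' \<inter> B l = {}" if "l' \<in> I" "l' \<noteq> l" for l'
      using \<open>F \<in> _\<close> \<open>l \<in> I\<close> that assms unfolding disjoint_family_on_def by (force simp: PiE_iff)
    moreover have "F l \<subseteq> B l" using that by (auto simp: PiE_iff)
    ultimately show ?thesis using \<open>l \<in> I\<close> by blast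
  qed
  show "\<forall>T\<in>{T. T \<subseteq> (\<Union>l\<in>I. B l) \<and> (\<forall>l\<in>I. P l (T \<inter> B l))}.
      (\<Union>l\<in>I. restrict (\<lambda>l. T \<inter> B l) I l) = T"
    by auto
  show "\<forall>F\<in>\<Pi>\<^sub>E l\<in>I. {S. S \<subseteq> B l \<and> P l S}. restrict (\<lambda>l. (\<Union>l'\<in>I. F l') \<inter> B l) I = F"
    using parts by (auto intro!: extensionalityI[where A = I] simp: PiE_iff)
  show "(\<lambda>T. restrict (\<lambda>l. T \<inter> B l) I) ` {T. T \<subseteq> (\<Union>l\<in>I. B l) \<and> (\<forall>l\<in>I. P l (T \<inter> B l))}
      \<subseteq> (\<Pi>\<^sub>E l\<in>I. {S. S \<subseteq> B l \<and> P l S})"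
    by auto
  show "(\<lambda>F. \<Union>l\<in>I. F l) ` (\<Pi>\<^sub>E l\<in>I. {S. S \<subseteq> B l \<and> P l S})
      \<subseteq> {T. T \<subseteq> (\<Union>l\<in>I. B l) \<and> (\<forall>l\<in>I. P l (T \<inter> B l))}"
    using parts by (fastforce simp: PiE_iff)
qed

context
  fixes m n j :: nat and a b :: "nat \<Rightarrow> nat"
begin

text \<open>A staircase matrix is determined by the set of rim cells holding 1, which
  meets every block in a collinear set.\<close>
definition rim_block :: "nat \<Rightarrow> (nat \<times> nat) set" where
  "rim_block l = {i. i < m \<and> a i = l} \<times> {k. k < n \<and> b k = j + 1 - l}"

definition rim_patterns :: "(nat \<times> nat) set set" where
  "rim_patterns = {T. T \<subseteq> (\<Union>l\<in>{1..j}. rim_block l) \<and> (\<forall>l\<in>{1..j}. collinear (T \<inter> rim_block l))}"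

definition rim_ones :: "(nat \<Rightarrow> nat \<Rightarrow> nat) \<Rightarrow> (nat \<times> nat) set" where
  "rim_ones A = {(i, k). i < m \<and> k < n \<and> rim_cell j a b i k \<and> A i k = 1}"

definition fill_rim :: "(nat \<times> nat) set \<Rightarrow> nat \<Rightarrow> nat \<Rightarrow> nat" where
  "fill_rim T i k = (if i < m \<and> k < n then (if interior_cell j a b i k then 2
      else if rim_cell j a b i k then (if (i, k) \<in> T then 1 else 2) else 0) else 0)"

lemma rim_block_level: "(i, k) \<in> rim_block l \<Longrightarrow> a i = l"
  unfolding rim_block_def by auto

lemma rim_blocks_disjoint: "disjoint_family_on rim_block {1..j}"
  unfolding disjoint_family_on_def rim_block_def by auto

lemma rim_cell_in_blocks:
  "(i, k) \<in> (\<Union>l\<in>{1..j}. rim_block l) \<longleftrightarrow> i < m \<and> k < n \<and> rim_cell j a b i k"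
  unfolding rim_block_def rim_cell_def by auto

text \<open>Inside the rim, two cells lie in a common block exactly when their rows have the same level.\<close>
lemma rim_patterns_iff:
  "T \<in> rim_patterns \<longleftrightarrow> T \<subseteq> (\<Union>l\<in>{1..j}. rim_block l) \<and>
     (\<forall>i k i' k'. (i, k) \<in> T \<longrightarrow> (i', k') \<in> T \<longrightarrow> a i = a i' \<longrightarrow> i = i' \<or> k = k')"
    (is "_ \<longleftrightarrow> ?cells \<and> ?same_level")
proof (cases ?cells)
  case True
  have "(\<forall>l\<in>{1..j}. collinear (T \<inter> rim_block l)) \<longleftrightarrow> ?same_level"
  proof
    assume collinear: "\<forall>l\<in>{1..j}. collinear (T \<inter> rim_block l)"
    show ?same_level
    proof (intro allI impI)
      fix i k i' k' assume ik: "(i, k) \<in> T" "(i', k') \<in> T" "a i = a i'"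
      then obtain l where l: "l \<in> {1..j}" "(i, k) \<in> rim_block l" using True by blast
      obtain l' where "(i', k') \<in> rim_block l'" using ik True by blast
      then have "(i', k') \<in> rim_block l" using ik(3) l(2) rim_block_level by metis
      moreover have "collinear (T \<inter> rim_block l)" using collinear l(1) by blast
      ultimately show "i = i' \<or> k = k'"
        using ik l unfolding collinear_def by force
    qed
  next
    assume ?same_level
    then show "\<forall>l\<in>{1..j}. collinear (T \<inter> rim_block l)"
      unfolding collinear_def using rim_block_level by fastforce
  qed
  then show ?thesis unfolding rim_patterns_def using True by blast
qed (simp add: rim_patterns_def)

lemma fill_rim_staircase:
  assumes "T \<in> rim_patterns"
  shows "staircase m n j a b (fill_rim T) \<and> rim_ones (fill_rim T) = T"
proof
  have cells: "T \<subseteq> (\<Union>l\<in>{1..j}. rim_block l)"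
    and same_level: "\<And>i k i' k'. (i, k) \<in> T \<Longrightarrow> (i', k') \<in> T \<Longrightarrow> a i = a i' \<Longrightarrow> i = i' \<or> k = k'"
    using assms unfolding rim_patterns_iff by blast+
  have one: "fill_rim T i k = 1 \<longleftrightarrow> (i, k) \<in> T" for i k
    using cells rim_cell_in_blocks[of i k] interior_not_rim[of j a b i k]
    unfolding fill_rim_def by auto
  show "staircase m n j a b (fill_rim T)"
    unfolding staircase_def
  proof (intro conjI allI impI)
    show "fill_rim T \<in> ternary_matrices m n"
      unfolding ternary_matrices_def fill_rim_def by auto
  next
    fix i i' k k' assume "i < m" "i' < m" "k < n" "k' < n" and
      "rim_cell j a b i k \<and> rim_cell j a b i' k' \<and> a i = a i' \<and>
        fill_rim T i k = 1 \<and> fill_rim T i' k' = 1"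
    then show "i = i' \<or> k = k'" using same_level one by blast
  qed (auto simp: fill_rim_def dest: interior_not_rim)
  have "i < m \<and> k < n \<and> rim_cell j a b i k" if "(i, k) \<in> T" for i k
    using that cells rim_cell_in_blocks by blast
  then show "rim_ones (fill_rim T) = T"
    using one unfolding rim_ones_def by auto
qed

lemma staircase_rim_ones:
  assumes "staircase m n j a b A"
  shows "rim_ones A \<in> rim_patterns \<and> fill_rim (rim_ones A) = A"
proof
  show "rim_ones A \<in> rim_patterns"
    unfolding rim_patterns_iff using assms rim_cell_in_blocks
    by (auto simp: rim_ones_def staircase_def)
  show "fill_rim (rim_ones A) = A"
  proof (intro ext)
    fix i k show "fill_rim (rim_ones A) i k = A i k"
    proof (cases "i < m \<and> k < n")
      case True
      then have "(interior_cell j a b i k \<longrightarrow> A i k = 2) \<and> (rim_cell j a b i k \<longrightarrow> 1 \<le> A i k) \<and>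
          (\<not> interior_cell j a b i k \<and> \<not> rim_cell j a b i k \<longrightarrow> A i k = 0) \<and> A i k \<le> 2"
        using assms unfolding staircase_def ternary_matrices_def by auto
      then show ?thesis using True by (auto simp: fill_rim_def rim_ones_def)
    qed (use assms in \<open>auto simp: fill_rim_def staircase_def ternary_matrices_def\<close>)
  qed
qed

lemma bij_betw_fill_rim: "bij_betw fill_rim rim_patterns {A. staircase m n j a b A}"
  by (rule bij_betw_byWitness[where f' = rim_ones])
    (use fill_rim_staircase staircase_rim_ones in auto)

text \<open>The rim blocks are filled independently, each in f3 ways.\<close>
lemma card_staircase:
  "int (card {A. staircase m n j a b A}) =
     (\<Prod>l\<in>{1..j}. f3 (card {i. i < m \<and> a i = l}) (card {k. k < n \<and> b k = j + 1 - l}))"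
proof -
  have "card {A. staircase m n j a b A} = card rim_patterns"
    using bij_betw_same_card[OF bij_betw_fill_rim] by simp
  also have "\<dots> = card (\<Pi>\<^sub>E l\<in>{1..j}. {S. S \<subseteq> rim_block l \<and> collinear S})"
    unfolding rim_patterns_def
    by (rule bij_betw_same_card[OF bij_betw_restrict_parts[OF rim_blocks_disjoint]])
  also have "\<dots> = (\<Prod>l\<in>{1..j}. card {S. S \<subseteq> rim_block l \<and> collinear S})"
    by (simp add: card_PiE)
  finally show ?thesis
    by (simp add: of_nat_prod rim_block_def card_collinear_subsets)
qed

lemma finite_staircase: "finite {A. staircase m n j a b A}"
proof -
  have "finite (\<Pi>\<^sub>E l\<in>{1..j}. {S. S \<subseteq> rim_block l \<and> collinear S})"
    by (intro finite_PiE) (auto simp: rim_block_def)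
  then have "finite rim_patterns"
    unfolding rim_patterns_def
    using bij_betw_finite[OF bij_betw_restrict_parts[OF rim_blocks_disjoint,
          where P = "\<lambda>_. collinear"]]
    by blast
  then show ?thesis using bij_betw_finite[OF bij_betw_fill_rim] by blast
qed

end


section \<open>Level maps with prescribed fibre sizes\<close>

text \<open>Listing the
  values of such a map gives a permutation of the multiset containing each l exactly xs ! l
  times, so they are counted by the multinomial coefficient.\<close>
definition fibre_maps :: "nat \<Rightarrow> nat list \<Rightarrow> (nat \<Rightarrow> nat) set" where
  "fibre_maps m xs = {f \<in> {..<m} \<rightarrow>\<^sub>E {..<length xs}.
     \<forall>l<length xs. card {i. i < m \<and> f i = l} = xs ! l}"

definition level_mset :: "nat list \<Rightarrow> nat multiset" where
  "level_mset xs = (\<Sum>l<length xs. replicate_mset (xs ! l) l)"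

lemma count_level_mset: "count (level_mset xs) l = (if l < length xs then xs ! l else 0)"
  by (simp add: level_mset_def count_sum)

lemma size_level_mset: "size (level_mset xs) = sum_list xs"
  by (simp add: level_mset_def sum_list_sum_nth atLeast0LessThan)

lemma set_level_mset: "set_mset (level_mset xs) = {l. l < length xs \<and> 0 < xs ! l}"
  by (auto simp: count_level_mset simp flip: count_greater_zero_iff split: if_splits)

lemma prod_fact_level_mset:
  "(\<Prod>l\<in>set_mset (level_mset xs). fact (count (level_mset xs) l)) = (\<Prod>x\<leftarrow>xs. fact x :: nat)"
proof -
  have "(\<Prod>x\<leftarrow>xs. fact x :: nat) = (\<Prod>l<length xs. fact (xs ! l))"
    by (simp add: prod.list_conv_set_nth atLeast0LessThan)
  also have "\<dots> = (\<Prod>l\<in>set_mset (level_mset xs). fact (xs ! l))"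
    by (rule prod.mono_neutral_right) (auto simp: set_level_mset)
  finally show ?thesis
    by (simp add: count_level_mset set_level_mset)
qed

lemma count_mset_map_upt: "count (mset (map f [0..<m])) l = card {i. i < m \<and> f i = l}"
proof -
  have "count (mset (map f [0..<m])) l =
      (\<Sum>i | i \<in># mset_set {0..<m} \<and> l = f i. count (mset_set {0..<m}) i)"
    by (simp add: count_image_mset')
  also have "\<dots> = (\<Sum>i | i < m \<and> f i = l. 1)"
    by (rule sum.cong) auto
  finally show ?thesis by simp
qed

lemma mset_fibre_map:
  assumes "f \<in> fibre_maps m xs"
  shows "mset (map f [0..<m]) = level_mset xs"
proof (rule multiset_eqI)
  fix l show "count (mset (map f [0..<m])) l = count (level_mset xs) l"
  proof (cases "l < length xs")
    case False
    then have "{i. i < m \<and> f i = l} = {}" using assms unfolding fibre_maps_def by fastforce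
    then show ?thesis using False unfolding count_mset_map_upt by (simp add: count_level_mset)
  qed (use assms in \<open>simp add: count_mset_map_upt count_level_mset fibre_maps_def del: mset_map\<close>)
qed

lemma fibre_map_of_permutation:
  assumes "mset ys = level_mset xs" "sum_list xs = m"
  shows "restrict (\<lambda>i. ys ! i) {..<m} \<in> fibre_maps m xs"
    and "map (restrict (\<lambda>i. ys ! i) {..<m}) [0..<m] = ys"
proof -
  define f where "f = restrict (\<lambda>i. ys ! i) {..<m}"
  have len: "length ys = m" using assms by (metis size_level_mset size_mset)
  then show "map (restrict (\<lambda>i. ys ! i) {..<m}) [0..<m] = ys"
    by (simp add: list_eq_iff_nth_eq)
  then have map_f: "map f [0..<m] = ys" by (simp add: f_def)
  have "card {i. i < m \<and> f i = l} = xs ! l" if "l < length xs" for l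
    using count_mset_map_upt[of f m l] that by (simp add: map_f assms(1) count_level_mset)
  moreover have "ys ! i < length xs" if "i < m" for i
  proof -
    have "count (level_mset xs) (ys ! i) > 0" using that len by (simp flip: assms(1))
    then show ?thesis by (metis count_level_mset less_irrefl)
  qed
  then have "f \<in> {..<m} \<rightarrow>\<^sub>E {..<length xs}" by (auto simp: f_def)
  ultimately show "restrict (\<lambda>i. ys ! i) {..<m} \<in> fibre_maps m xs"
    by (simp add: fibre_maps_def f_def[symmetric])
qed

lemma fibre_maps_bij:
  assumes "sum_list xs = m"
  shows "bij_betw (\<lambda>f. map f [0..<m]) (fibre_maps m xs) (permutations_of_multiset (level_mset xs))"
proof (rule bij_betw_imageI)
  show "inj_on (\<lambda>f. map f [0..<m]) (fibre_maps m xs)"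
  proof (rule inj_onI)
    fix f g assume "f \<in> fibre_maps m xs" "g \<in> fibre_maps m xs" "map f [0..<m] = map g [0..<m]"
    then show "f = g"
      unfolding fibre_maps_def by (intro PiE_ext[of f "{..<m}" _ g]) (auto simp: map_eq_conv)
  qed
  show "(\<lambda>f. map f [0..<m]) ` fibre_maps m xs = permutations_of_multiset (level_mset xs)"
  proof (intro equalityI subsetI)
    fix ys assume "ys \<in> (\<lambda>f. map f [0..<m]) ` fibre_maps m xs"
    then show "ys \<in> permutations_of_multiset (level_mset xs)"
      using mset_fibre_map by (auto intro: permutations_of_multisetI)
  next
    fix ys assume "ys \<in> permutations_of_multiset (level_mset xs)"
    then have "mset ys = level_mset xs" by (rule permutations_of_multisetD)
    from fibre_map_of_permutation[OF this assms]
    show "ys \<in> (\<lambda>f. map f [0..<m]) ` fibre_maps m xs"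
      by (intro image_eqI[where x = "restrict (\<lambda>i. ys ! i) {..<m}"]) simp_all
  qed
qed

lemma card_fibre_maps:
  assumes "sum_list xs = m"
  shows "int (card (fibre_maps m xs)) = multinomial m xs"
proof -
  have "card (fibre_maps m xs) = card (permutations_of_multiset (level_mset xs))"
    by (rule bij_betw_same_card[OF fibre_maps_bij[OF assms]])
  also have "\<dots> = fact m div (\<Prod>x\<leftarrow>xs. fact x)"
    by (simp add: card_permutations_of_multiset prod_fact_level_mset size_level_mset assms)
  finally show ?thesis by (simp add: multinomial_def)
qed

definition fibre_sizes :: "nat \<Rightarrow> nat \<Rightarrow> (nat \<Rightarrow> nat) \<Rightarrow> nat list" where
  "fibre_sizes m j a = map (\<lambda>l. card {i. i < m \<and> a i = l}) [0..<j + 1]"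

lemma fibre_sizes_nth: "l \<le> j \<Longrightarrow> fibre_sizes m j a ! l = card {i. i < m \<and> a i = l}"
  unfolding fibre_sizes_def by (simp add: nth_append del: upt_Suc)

lemma finite_level_maps: "finite (level_maps m j)"
  unfolding level_maps_def
  by (rule finite_subset[of _ "{..<m} \<rightarrow>\<^sub>E {0..j}"]) (auto intro: finite_PiE)

lemma finite_S_set: "finite (S_set l j)"
proof (rule finite_subset)
  show "S_set l j \<subseteq> {xs. set xs \<subseteq> {0..l} \<and> length xs = j + 1}"
    unfolding S_set_def using member_le_sum_list by fastforce
qed (rule finite_lists_length_eq, simp)

lemma S_set_zero: "S_set l 0 = {[l]}"
  unfolding S_set_def by (auto simp: length_Suc_conv)

lemma fibre_sizes_in_S_set:
  assumes "a \<in> level_maps m j"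
  shows "fibre_sizes m j a \<in> S_set m j"
proof -
  have "sum_list (fibre_sizes m j a) = (\<Sum>l\<in>{0..<j + 1}. card {i \<in> {..<m}. a i = l})"
    unfolding fibre_sizes_def by (simp add: interv_sum_list_conv_sum_set_nat del: upt_Suc)
  also have "\<dots> = card {..<m}"
    using assms level_maps_le[OF assms]
    by (subst card_eq_sum, subst sum.group[symmetric, of "{..<m}" "{0..<j + 1}" a "\<lambda>_. 1"])
      (auto simp: less_Suc_eq_le)
  finally have "sum_list (fibre_sizes m j a) = m" by simp
  moreover have "1 \<le> fibre_sizes m j a ! l" if l: "l \<in> {1..j}" for l
  proof -
    obtain i where "i < m" "a i = l" using level_maps_hit[OF assms l] by blast
    then have "card {i. i < m \<and> a i = l} \<noteq> 0" by (auto simp: card_eq_0_iff)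
    moreover have "fibre_sizes m j a ! l = card {i. i < m \<and> a i = l}"
      using l fibre_sizes_nth[of l j m a] by simp
    ultimately show ?thesis by linarith
  qed
  ultimately show ?thesis unfolding S_set_def fibre_sizes_def by simp
qed

lemma level_maps_with_fibre_sizes:
  assumes "ms \<in> S_set m j"
  shows "{a \<in> level_maps m j. fibre_sizes m j a = ms} = fibre_maps m ms"
proof -
  have len: "length ms = j + 1" and pos: "\<And>l. l \<in> {1..j} \<Longrightarrow> 1 \<le> ms ! l"
    using assms unfolding S_set_def by auto
  have sizes: "fibre_sizes m j a = ms \<longleftrightarrow> (\<forall>l<j + 1. card {i. i < m \<and> a i = l} = ms ! l)" for a
    using len by (auto simp: list_eq_iff_nth_eq fibre_sizes_nth fibre_sizes_def[of m j a]
        simp del: upt_Suc)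
  have hit: "{1..j} \<subseteq> a ` {..<m}" if sizes: "\<forall>l<j + 1. card {i. i < m \<and> a i = l} = ms ! l" for a
  proof
    fix l assume l: "l \<in> {1..j}"
    then have "card {i. i < m \<and> a i = l} \<noteq> 0" using sizes pos[OF l] by auto
    then have "{i. i < m \<and> a i = l} \<noteq> {}" by (metis card.empty)
    then show "l \<in> a ` {..<m}" by auto
  qed
  have "{..<length ms} = {0..j}" using len by auto
  then show ?thesis
    unfolding level_maps_def fibre_maps_def sizes using len hit by auto
qed

lemma sum_level_maps:
  fixes g :: "nat list \<Rightarrow> int"
  shows "(\<Sum>a\<in>level_maps m j. g (fibre_sizes m j a)) = (\<Sum>ms\<in>S_set m j. multinomial m ms * g ms)"
proof -
  have "(\<Sum>a\<in>level_maps m j. g (fibre_sizes m j a)) =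
      (\<Sum>ms\<in>S_set m j. \<Sum>a\<in>{a \<in> level_maps m j. fibre_sizes m j a = ms}. g (fibre_sizes m j a))"
    by (rule sum.group[symmetric]) (auto simp: finite_level_maps finite_S_set fibre_sizes_in_S_set)
  also have "\<dots> = (\<Sum>ms\<in>S_set m j. int (card (fibre_maps m ms)) * g ms)"
  proof (rule sum.cong[OF refl])
    fix ms assume "ms \<in> S_set m j"
    have "(\<Sum>a\<in>{a \<in> level_maps m j. fibre_sizes m j a = ms}. g (fibre_sizes m j a)) =
        (\<Sum>a\<in>{a \<in> level_maps m j. fibre_sizes m j a = ms}. g ms)"
      by (rule sum.cong) auto
    then show "(\<Sum>a\<in>{a \<in> level_maps m j. fibre_sizes m j a = ms}. g (fibre_sizes m j a)) =
        int (card (fibre_maps m ms)) * g ms"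
      using level_maps_with_fibre_sizes[OF \<open>ms \<in> S_set m j\<close>] by simp
  qed
  also have "\<dots> = (\<Sum>ms\<in>S_set m j. multinomial m ms * g ms)"
    by (rule sum.cong) (auto simp: card_fibre_maps S_set_def)
  finally show ?thesis .
qed

lemma sum_level_map_pairs:
  fixes g :: "nat list \<Rightarrow> nat list \<Rightarrow> int"
  shows "(\<Sum>a\<in>level_maps m j. \<Sum>b\<in>level_maps n j. g (fibre_sizes m j a) (fibre_sizes n j b)) =
    (\<Sum>ms\<in>S_set m j. \<Sum>ns\<in>S_set n j. multinomial m ms * multinomial n ns * g ms ns)"
proof -
  have "(\<Sum>a\<in>level_maps m j. \<Sum>b\<in>level_maps n j. g (fibre_sizes m j a) (fibre_sizes n j b)) =
      (\<Sum>a\<in>level_maps m j. \<Sum>ns\<in>S_set n j. multinomial n ns * g (fibre_sizes m j a) ns)"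
    by (rule sum.cong[OF refl]) (rule sum_level_maps)
  also have "\<dots> = (\<Sum>ms\<in>S_set m j. multinomial m ms * (\<Sum>ns\<in>S_set n j. multinomial n ns * g ms ns))"
    by (rule sum_level_maps)
  finally show ?thesis by (simp add: sum_distrib_left mult.assoc)
qed


section \<open>Counting strong lonesum matrices\<close>

definition shapes :: "nat \<Rightarrow> nat \<Rightarrow> (nat \<times> (nat \<Rightarrow> nat) \<times> (nat \<Rightarrow> nat)) set" where
  "shapes m n = (SIGMA j:{0..min m n}. level_maps m j \<times> level_maps n j)"

text \<open>The weight of a pair of fibre-size tuples: the number of staircase matrices of any shape
  with these fibre sizes.\<close>
definition shape_weight :: "nat \<Rightarrow> nat list \<Rightarrow> nat list \<Rightarrow> int" where
  "shape_weight j ms ns = (\<Prod>l\<in>{1..j}. f3 (ms ! l) (ns ! (j + 1 - l)))"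

lemma strong_lonesum_eq_staircase:
  "{A. strong_lonesum m n A} = (\<Union>(j, a, b)\<in>shapes m n. {A. staircase m n j a b A})"
proof (intro equalityI subsetI)
  fix A assume "A \<in> {A. strong_lonesum m n A}"
  then have "A \<in> ternary_matrices m n" "\<not> switchable m n A"
    using strong_lonesum_not_switchable unfolding strong_lonesum_def by auto
  then show "A \<in> (\<Union>(j, a, b)\<in>shapes m n. {A. staircase m n j a b A})"
    using row_level_in_level_maps col_level_in_level_maps num_steps_le staircase_of_levels
    unfolding shapes_def by fastforce
qed (auto simp: shapes_def intro: staircase_strong_lonesum)

lemma staircase_shape_unique:
  assumes "(j, a, b) \<in> shapes m n" "(j', a', b') \<in> shapes m n"
    and "staircase m n j a b A" "staircase m n j' a' b' A"
  shows "(j, a, b) = (j', a', b')"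
proof -
  have "a \<in> level_maps m j" "b \<in> level_maps n j" "a' \<in> level_maps m j'" "b' \<in> level_maps n j'"
    using assms(1,2) unfolding shapes_def by auto
  then have "j = j'" "a = a'" "b = b'"
    using num_steps_unique row_level_unique col_level_unique assms(3,4) by metis+
  then show ?thesis by simp
qed

lemma card_strong_lonesum:
  "int (card {A. strong_lonesum m n A}) =
     (\<Sum>j\<in>{0..min m n}. \<Sum>a\<in>level_maps m j. \<Sum>b\<in>level_maps n j.
        shape_weight j (fibre_sizes m j a) (fibre_sizes n j b))"
proof -
  have "finite (shapes m n)"
    unfolding shapes_def using finite_level_maps by (intro finite_SigmaI) auto
  then have "card {A. strong_lonesum m n A} =
      (\<Sum>(j, a, b)\<in>shapes m n. card {A. staircase m n j a b A})"
    unfolding strong_lonesum_eq_staircase split_def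
    by (intro card_UN_disjoint ballI impI finite_staircase)
      (auto dest: staircase_shape_unique simp: prod_eq_iff)
  also have "\<dots> = (\<Sum>j\<in>{0..min m n}. \<Sum>(a, b)\<in>level_maps m j \<times> level_maps n j.
      card {A. staircase m n j a b A})"
    unfolding shapes_def by (rule sum.Sigma[symmetric]) (auto simp: finite_level_maps)
  also have "\<dots> = (\<Sum>j\<in>{0..min m n}. \<Sum>a\<in>level_maps m j. \<Sum>b\<in>level_maps n j.
      card {A. staircase m n j a b A})"
    by (simp add: sum.cartesian_product)
  moreover have "int (card {A. staircase m n j a b A}) =
      shape_weight j (fibre_sizes m j a) (fibre_sizes n j b)" for j a b
    unfolding card_staircase shape_weight_def
    by (rule prod.cong) (auto simp: fibre_sizes_nth)
  ultimately show ?thesis by (simp add: of_nat_sum)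
qed

text \<open>Grouping level maps by their fibre sizes yields the multinomial coefficients; the shape
  with j = 0 is the zero matrix and contributes 1.\<close>
theorem theorem3p5:
  fixes m n :: nat
  assumes "1 \<le> m" and "1 \<le> n"
  shows "int (num_strong_lonesum m n) =
    1 + (\<Sum>j\<in>{1..min m n}. \<Sum>ms\<in>S_set m j. \<Sum>ns\<in>S_set n j.
           multinomial m ms * multinomial n ns *
           (\<Prod>i\<in>{1..j}. f3 (ms ! i) (ns ! (j + 1 - i))))"
proof -
  let ?term = "\<lambda>j. \<Sum>ms\<in>S_set m j. \<Sum>ns\<in>S_set n j.
    multinomial m ms * multinomial n ns * shape_weight j ms ns"
  have "int (num_strong_lonesum m n) = (\<Sum>j\<in>{0..min m n}. ?term j)"
    unfolding num_strong_lonesum_def card_strong_lonesum sum_level_map_pairs ..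
  also have "\<dots> = ?term 0 + (\<Sum>j\<in>{1..min m n}. ?term j)"
    by (simp add: sum.atLeast_Suc_atMost)
  also have "?term 0 = 1"
    by (simp add: S_set_zero multinomial_def shape_weight_def)
  finally show ?thesis unfolding shape_weight_def .
qed

end
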